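(* Let $T$ be a node with $t$ cases, let $R_0$ be the residual sum of squares of the current residuals in $T$ (before fitting), and let $\Delta_1,\Delta_2$ and $v_1,v_2$ be the impurity gains and degrees of freedom of two regression models fitted on $T$. Then: (i) If model 1 does better than CON, i.e. $\mathrm{BIC}_{con}>\mathrm{BIC}_1$, then $t\Delta_1/R_0>C(v_1,t)>0$ for some positive function $C$ depending only on $v_1$ and $t$. (ii) If $\mathrm{BIC}_{con}>\mathrm{BIC}_1$ and $\mathrm{BIC}_2>\mathrm{BIC}_1$ with $v_2\ge v_1$, then $\frac{\Delta_1}{\Delta_2}\ge\frac{v_1-1}{v_2-1}$. Moreover, if CON is chosen at a node, it will also be chosen in subsequent model selections on that node.
   Context: For a model fitted by least squares to the current residuals $r$ of the $t$ cases in a node $T$, the impurity gain is $\Delta=(R_0-\mathrm{RSS})/t$, where $\mathrm{RSS}$ is the residual sum of squares after the fit, so $\mathrm{RSS}=R_0-t\Delta$. The BIC of a model with $v$ degrees of freedom is $\mathrm{BIC}=t\log(\mathrm{RSS}/t)+v\log t$. CON is the constant (mean) fit, with $v=1$. In the PILOT algorithm, in each node the model (among CON, LIN, PCON, BLIN, PLIN with $v=1,2,5,5,7$) with smallest BIC is selected; "subsequent model selections" means selection applied again to the residuals of the node after the fit. *)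

theory Defs
  imports Complex_Main
begin

text \<open>A node T holds t cases (indices i < t), with p numeric predictors:
  x i j is the value of predictor j (j < p) for case i, and r i is the current
  residual of case i. A regression model is fitted by least squares; a model class
  is represented by the set of fitted-value vectors (nat => real) it can produce.\<close>

datatype pmodel = CON | LIN | PCON | BLIN | PLIN

fun df :: "pmodel \<Rightarrow> nat" where
  "df CON = 1" | "df LIN = 2" | "df PCON = 5" | "df BLIN = 5" | "df PLIN = 7"

fun model_class :: "(nat \<Rightarrow> nat \<Rightarrow> real) \<Rightarrow> nat \<Rightarrow> pmodel \<Rightarrow> (nat \<Rightarrow> real) set" where
  "model_class x p CON = {f. \<exists>c. f = (\<lambda>i. c)}"
| "model_class x p LIN = {f. \<exists>j<p. \<exists>a b. f = (\<lambda>i. a + b * x i j)}"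
| "model_class x p PCON = {f. \<exists>j<p. \<exists>s a b. f = (\<lambda>i. if x i j \<le> s then a else b)}"
| "model_class x p BLIN = {f. \<exists>j<p. \<exists>s a b c.
       f = (\<lambda>i. a + b * x i j + c * max (x i j - s) 0)}"
| "model_class x p PLIN = {f. \<exists>j<p. \<exists>s a1 b1 a2 b2.
       f = (\<lambda>i. if x i j \<le> s then a1 + b1 * x i j else a2 + b2 * x i j)}"

definition R0 :: "nat \<Rightarrow> (nat \<Rightarrow> real) \<Rightarrow> real" where
  "R0 t r = (\<Sum>i<t. (r i)\<^sup>2)"

definition rss :: "nat \<Rightarrow> (nat \<Rightarrow> nat \<Rightarrow> real) \<Rightarrow> nat \<Rightarrow> (nat \<Rightarrow> real) \<Rightarrow> pmodel \<Rightarrow> real" where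
  "rss t x p r m = Inf ((\<lambda>f. \<Sum>i<t. (r i - f i)\<^sup>2) ` model_class x p m)"

definition gain :: "nat \<Rightarrow> (nat \<Rightarrow> nat \<Rightarrow> real) \<Rightarrow> nat \<Rightarrow> (nat \<Rightarrow> real) \<Rightarrow> pmodel \<Rightarrow> real" where
  "gain t x p r m = (R0 t r - rss t x p r m) / real t"

definition bic :: "nat \<Rightarrow> real \<Rightarrow> nat \<Rightarrow> real" where
  "bic t R v = real t * ln (R / real t) + real v * ln (real t)"

definition BIC :: "nat \<Rightarrow> (nat \<Rightarrow> nat \<Rightarrow> real) \<Rightarrow> nat \<Rightarrow> (nat \<Rightarrow> real) \<Rightarrow> pmodel \<Rightarrow> real" where
  "BIC t x p r m = bic t (rss t x p r m) (df m)"

definition con_selected :: "nat \<Rightarrow> (nat \<Rightarrow> nat \<Rightarrow> real) \<Rightarrow> nat \<Rightarrow> (nat \<Rightarrow> real) \<Rightarrow> bool" where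
  "con_selected t x p r = (\<forall>m. BIC t x p r CON \<le> BIC t x p r m)"

end

(*
  Write q = t powr (-1/t), a number in (0, 1) once t >= 2. For positive RSS values,
  BIC_1 < BIC_2 is equivalent to RSS_1 * q^v2 < RSS_2 * q^v1. Beating CON therefore means
  RSS_1 < q^(v1-1) * RSS_con <= q^(v1-1) * R0, i.e. t Delta_1 / R0 > 1 - q^(v1-1). Beating
  model 2 as well means RSS_2 > q^(v2-v1) * RSS_1; together with the first bound and the
  inequality n (1 - q^k) <= k (1 - q^n) for n <= k this gives
  (v1 - 1) (R0 - RSS_2) <= (v2 - 1) (R0 - RSS_1). Finally, every model class is closed
  under adding constants, so shifting the residuals leaves every RSS, hence every BIC,
  unchanged.
*)

theory Submission imports Defs begin

lemma const_in_model_class: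
  assumes "0 < p"
  shows "(\<lambda>i. c) \<in> model_class x p m"
  using assms by (cases m) (force intro: exI[of _ 0])+

lemma translate_in_model_class:
  assumes "f \<in> model_class x p m"
  shows "(\<lambda>i. d + f i) \<in> model_class x p m"
  using assms
  by (cases m) (auto simp: if_distrib[of "(+) d"], simp_all only: add.assoc [symmetric], blast+)

lemma translate_model_class: "(\<lambda>f i. d + f i) ` model_class x p m = model_class x p m"
proof
  show "(\<lambda>f i. d + f i) ` model_class x p m \<subseteq> model_class x p m"
    by (auto intro: translate_in_model_class)
  show "model_class x p m \<subseteq> (\<lambda>f i. d + f i) ` model_class x p m"
  proof
    fix f assume "f \<in> model_class x p m"
    then have "(\<lambda>i. - d + f i) \<in> model_class x p m" by (rule translate_in_model_class)
    then show "f \<in> (\<lambda>f i. d + f i) ` model_class x p m" by (rule rev_image_eqI) simp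
  qed
qed

lemma df_ge_2: "m \<noteq> CON \<Longrightarrow> 2 \<le> df m"
  by (cases m) auto

lemma rss_le_sum:
  assumes "f \<in> model_class x p m"
  shows "rss t x p r m \<le> (\<Sum>i<t. (r i - f i)\<^sup>2)"
  unfolding rss_def using assms by (auto intro!: cInf_lower bdd_belowI[of _ 0] sum_nonneg)

lemma rss_nonneg:
  assumes "0 < p"
  shows "0 \<le> rss t x p r m"
  unfolding rss_def using const_in_model_class[OF assms, of 0 x m]
  by (intro cInf_greatest) (auto intro: sum_nonneg)

lemma rss_le_rss_CON: "0 < p \<Longrightarrow> rss t x p r m \<le> rss t x p r CON"
  unfolding rss_def
  by (rule cInf_superset_mono) (auto intro!: const_in_model_class bdd_belowI[of _ 0] sum_nonneg)

lemma rss_CON_le_R0: "rss t x p r CON \<le> R0 t r"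
  using rss_le_sum[of "\<lambda>i. 0" x p CON t r] by (force simp: R0_def)

lemma rss_translate: "rss t x p (\<lambda>i. r i - c) m = rss t x p r m"
proof -
  have "(\<lambda>f. \<Sum>i<t. (r i - c - f i)\<^sup>2) ` model_class x p m
      = (\<lambda>f. \<Sum>i<t. (r i - f i)\<^sup>2) ` (\<lambda>f i. c + f i) ` model_class x p m"
    by (simp add: image_image diff_diff_eq)
  then show ?thesis
    unfolding rss_def by (simp only: translate_model_class)
qed

lemma mult_gain: "0 < t \<Longrightarrow> real t * gain t x p r m = R0 t r - rss t x p r m"
  by (simp add: gain_def)

(* Under BIC, each additional degree of freedom must shrink the RSS by this factor. *)
definition bic_rss_factor :: "nat \<Rightarrow> real" where
  "bic_rss_factor t = real t powr (- 1 / real t)"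

definition min_relative_gain :: "nat \<Rightarrow> nat \<Rightarrow> real" where
  "min_relative_gain v t = 1 - bic_rss_factor t ^ (v - 1)"

lemma bic_rss_factor_pos: "0 < t \<Longrightarrow> 0 < bic_rss_factor t"
  by (simp add: bic_rss_factor_def)

lemma bic_rss_factor_le_one: "bic_rss_factor t \<le> 1"
  using powr_mono[of "- 1 / real t" 0 "real t"] by (cases "t = 0") (auto simp: bic_rss_factor_def)

lemma bic_rss_factor_less_one: "2 \<le> t \<Longrightarrow> bic_rss_factor t < 1"
  by (simp add: bic_rss_factor_def powr_less_one)

lemma min_relative_gain_pos:
  assumes "2 \<le> t" "2 \<le> v"
  shows "0 < min_relative_gain v t"
proof -
  have "bic_rss_factor t ^ Suc (v - 2) < 1"
    using assms by (intro power_Suc_less_one bic_rss_factor_pos bic_rss_factor_less_one) auto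
  then show ?thesis
    using assms(2) by (simp add: min_relative_gain_def Suc_diff_Suc numeral_2_eq_2)
qed

lemma bic_less_bic_iff:
  assumes "0 < t" "0 < X" "0 < Y"
  shows "bic t X v < bic t Y w \<longleftrightarrow> X * bic_rss_factor t ^ w < Y * bic_rss_factor t ^ v"
proof -
  have ln_scaled: "ln (Z * bic_rss_factor t ^ u) = ln Z - real u * ln (real t) / real t"
    if "0 < Z" for Z u
    using that assms(1) by (simp add: bic_rss_factor_def ln_mult ln_realpow)
  have "(bic t X v - bic t Y w) / real t
      = ln (X * bic_rss_factor t ^ w) - ln (Y * bic_rss_factor t ^ v)"
    using assms unfolding bic_def
    by (simp add: ln_scaled ln_div diff_divide_distrib add_divide_distrib algebra_simps)
  then have "bic t X v < bic t Y w \<longleftrightarrow> ln (X * bic_rss_factor t ^ w) < ln (Y * bic_rss_factor t ^ v)"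
    using assms(1) by (smt (verit) divide_less_0_iff of_nat_0_less_iff)
  then show ?thesis
    using assms bic_rss_factor_pos by simp
qed

lemma one_minus_power_ratio_antimono:
  fixes y :: real
  assumes "0 \<le> y" "y \<le> 1" "n \<le> k"
  shows "real n * (1 - y ^ k) \<le> real k * (1 - y ^ n)"
  using assms(3)
proof (induction k rule: dec_induct)
  case base
  show ?case by simp
next
  case (step k)
  have "(\<Sum>i<n. y ^ k) \<le> (\<Sum>i<n. y ^ i)"
    using step.hyps assms by (intro sum_mono power_decreasing) auto
  then have "real n * y ^ k * (1 - y) \<le> (\<Sum>i<n. y ^ i) * (1 - y)"
    using assms by (intro mult_right_mono) auto
  also have "\<dots> = 1 - y ^ n"
    by (simp add: one_diff_power_eq mult.commute)
  finally have "real n * (y ^ k - y ^ Suc k) \<le> 1 - y ^ n"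
    by (simp add: algebra_simps)
  with step.IH show ?case by (simp add: algebra_simps)
qed

lemma mult_diff_le_mult_diff_of_power_bounds:
  fixes y R X1 X2 :: real
  assumes "0 \<le> y" "y \<le> 1" "n \<le> k" "0 \<le> R"
    and "X1 \<le> R * y ^ n" "X1 * y ^ (k - n) \<le> X2"
  shows "real n * (R - X2) \<le> real k * (R - X1)"
proof -
  have "real n * y ^ (k - n) \<le> real n"
    using assms(1,2) by (simp add: mult_left_le power_le_one)
  then have "X1 * (real k - real n * y ^ (k - n)) \<le> R * y ^ n * (real k - real n * y ^ (k - n))"
    using assms(3,5) by (intro mult_right_mono) auto
  also have "\<dots> = R * (real k * y ^ n - real n * y ^ k)"
    using assms(3) by (simp add: algebra_simps flip: power_add)
  also have "\<dots> \<le> R * (real k - real n)"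
    using one_minus_power_ratio_antimono[OF assms(1-3)] assms(4)
    by (intro mult_left_mono) (auto simp: algebra_simps)
  finally have "X1 * (real k - real n * y ^ (k - n)) \<le> R * (real k - real n)" .
  moreover have "real n * (X1 * y ^ (k - n)) \<le> real n * X2"
    using assms(6) by (intro mult_left_mono) auto
  ultimately show ?thesis by (simp add: algebra_simps)
qed

lemma less_of_bic_less_bic_one:
  assumes "0 < t" "1 \<le> v" "0 \<le> X" "X \<le> c" "bic t X v < bic t c 1"
  shows "X < c * bic_rss_factor t ^ (v - 1)"
proof -
  have y_pos: "0 < bic_rss_factor t" using assms(1) by (rule bic_rss_factor_pos)
  have "0 < c"
  proof (rule ccontr)
    assume "\<not> 0 < c"
    with assms(3,4) have "X = 0" "c = 0" by auto
    \<comment> \<open>since \<open>ln 0 = 0\<close>, both BIC values reduce to their penalty terms\<close>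
    moreover have "ln (real t) \<le> real v * ln (real t)"
      using assms(1,2) by (simp add: mult_le_cancel_right1)
    ultimately show False using assms(5) by (simp add: bic_def)
  qed
  show ?thesis
  proof (cases "X = 0")
    case True
    with \<open>0 < c\<close> y_pos show ?thesis by simp
  next
    case False
    with assms \<open>0 < c\<close> have "X * bic_rss_factor t < c * bic_rss_factor t ^ v"
      using bic_less_bic_iff[of t X c v 1] by simp
    also have "\<dots> = c * bic_rss_factor t ^ (v - 1) * bic_rss_factor t"
      using assms(2) by (simp add: power_eq_if)
    finally show ?thesis using y_pos by simp
  qed
qed

lemma relative_gain_gt_of_bic_less:
  assumes "0 < t" "1 \<le> v" "0 \<le> X" "X \<le> c" "c \<le> R" "bic t X v < bic t c 1"
  shows "min_relative_gain v t < (R - X) / R"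
proof -
  have "X < c * bic_rss_factor t ^ (v - 1)"
    using assms(1-4,6) by (rule less_of_bic_less_bic_one)
  also have "\<dots> \<le> R * bic_rss_factor t ^ (v - 1)"
    using assms(5) bic_rss_factor_pos[OF assms(1)] by (simp add: mult_right_mono)
  finally have "X < R * bic_rss_factor t ^ (v - 1)" .
  moreover from this have "0 < R"
    using assms(3) bic_rss_factor_pos[OF assms(1)]
    by (metis le_less_trans zero_less_mult_pos2 zero_less_power)
  ultimately show ?thesis by (simp add: min_relative_gain_def field_simps)
qed

lemma gain_ratio_ge_of_bic_less:
  assumes "0 < t" "1 \<le> v1" "v1 \<le> v2" "0 < X1" "0 < X2" "X1 \<le> c" "c \<le> R" "X2 < R"
    and "bic t X1 v1 < bic t c 1" "bic t X1 v1 < bic t X2 v2"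
  shows "(real v1 - 1) / (real v2 - 1) \<le> (R - X1) / (R - X2)"
proof -
  define y where "y = bic_rss_factor t"
  have y: "0 < y" "y \<le> 1"
    using assms(1) bic_rss_factor_pos bic_rss_factor_le_one by (auto simp: y_def)
  have "X1 < c * y ^ (v1 - 1)"
    unfolding y_def using assms(1,2,4,6,9) by (intro less_of_bic_less_bic_one) auto
  also have "\<dots> \<le> R * y ^ (v1 - 1)"
    using assms(7) y by (intro mult_right_mono) auto
  finally have X1_le: "X1 \<le> R * y ^ (v1 - 1)" by simp
  have "X1 * y ^ (v2 - v1) * y ^ v1 < X2 * y ^ v1"
    using bic_less_bic_iff[of t X1 X2 v1 v2] assms(1,3,4,5,10)
    by (simp add: y_def mult.assoc flip: power_add)
  then have "X1 * y ^ ((v2 - 1) - (v1 - 1)) \<le> X2"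
    using y assms(2,3) by (simp add: diff_diff_cancel)
  with X1_le y assms have "real (v1 - 1) * (R - X2) \<le> real (v2 - 1) * (R - X1)"
    by (intro mult_diff_le_mult_diff_of_power_bounds) auto
  then show ?thesis
    using assms(2-8) by (auto simp: of_nat_diff divide_simps mult.commute)
qed

lemma two_le_card_if_BIC_less_CON:
  assumes "0 < p" "BIC t x p r m < BIC t x p r CON"
  shows "2 \<le> t"
proof (rule ccontr)
  assume "\<not> 2 \<le> t"
  \<comment> \<open>then CON fits exactly and every BIC value is 0\<close>
  then have "t = 0 \<or> t = 1" by auto
  then have "(\<Sum>i<t. (r i - r 0)\<^sup>2) = 0" and ln_t: "ln (real t) = 0" by auto
  moreover have "rss t x p r CON \<le> (\<Sum>i<t. (r i - r 0)\<^sup>2)"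
    by (rule rss_le_sum) auto
  ultimately have "rss t x p r CON = 0" "rss t x p r m = 0"
    using rss_nonneg[OF assms(1)] rss_le_rss_CON[OF assms(1), of t x r m] by (auto intro: antisym)
  with assms(2) ln_t show False by (simp add: BIC_def bic_def)
qed

lemma relative_gain_gt_if_BIC_less_CON:
  assumes "0 < p" "BIC t x p r m < BIC t x p r CON"
  shows "min_relative_gain (df m) t < real t * gain t x p r m / R0 t r"
proof -
  have "2 \<le> t" using assms by (rule two_le_card_if_BIC_less_CON)
  moreover have "2 \<le> df m" using assms(2) by (intro df_ge_2) auto
  ultimately show ?thesis
    using assms rss_nonneg rss_le_rss_CON rss_CON_le_R0
      relative_gain_gt_of_bic_less[of t "df m" "rss t x p r m" "rss t x p r CON" "R0 t r"]
    by (simp add: mult_gain BIC_def)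
qed

lemma gain_ratio_ge_if_BIC_less:
  assumes "0 < p" "BIC t x p r m1 < BIC t x p r CON" "BIC t x p r m1 < BIC t x p r m2"
    and "df m1 \<le> df m2" "0 < rss t x p r m1" "0 < rss t x p r m2" "0 < gain t x p r m2"
  shows "(real (df m1) - 1) / (real (df m2) - 1) \<le> gain t x p r m1 / gain t x p r m2"
proof -
  have "2 \<le> t" using assms(1,2) by (rule two_le_card_if_BIC_less_CON)
  moreover have "2 \<le> df m1" using assms(2) by (intro df_ge_2) auto
  moreover have "rss t x p r m2 < R0 t r"
    using assms(7) by (simp add: gain_def zero_less_divide_iff)
  ultimately show ?thesis
    using assms rss_le_rss_CON rss_CON_le_R0 gain_ratio_ge_of_bic_less[of t "df m1" "df m2"
        "rss t x p r m1" "rss t x p r m2" "rss t x p r CON" "R0 t r"]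
    by (simp add: gain_def BIC_def)
qed

lemma con_selected_translate:
  "con_selected t x p r \<Longrightarrow> con_selected t x p (\<lambda>i. r i - c)"
  by (simp add: con_selected_def BIC_def rss_translate)

theorem proposition2:
  shows "(\<exists>C :: nat \<Rightarrow> nat \<Rightarrow> real.
           \<forall>(t::nat) (p::nat) (x::nat \<Rightarrow> nat \<Rightarrow> real) (r::nat \<Rightarrow> real) (m::pmodel).
             0 < p \<longrightarrow> BIC t x p r CON > BIC t x p r m \<longrightarrow>
               real t * gain t x p r m / R0 t r > C (df m) t \<and> C (df m) t > 0)
       \<and> (\<forall>(t::nat) (p::nat) (x::nat \<Rightarrow> nat \<Rightarrow> real) (r::nat \<Rightarrow> real) (m1::pmodel) (m2::pmodel).
             0 < p \<longrightarrow> BIC t x p r CON > BIC t x p r m1 \<longrightarrow> BIC t x p r m2 > BIC t x p r m1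
             \<longrightarrow> df m2 \<ge> df m1 \<longrightarrow> rss t x p r m1 > 0 \<longrightarrow> rss t x p r m2 > 0
             \<longrightarrow> gain t x p r m2 > 0
             \<longrightarrow> gain t x p r m1 / gain t x p r m2 \<ge> (real (df m1) - 1) / (real (df m2) - 1))
       \<and> (\<forall>(t::nat) (p::nat) (x::nat \<Rightarrow> nat \<Rightarrow> real) (r::nat \<Rightarrow> real).
             0 < p \<longrightarrow> con_selected t x p r \<longrightarrow>
             (\<forall>c. (\<Sum>i<t. (r i - c)\<^sup>2) = rss t x p r CON \<longrightarrow>
                  con_selected t x p (\<lambda>i. r i - c)))"
proof (intro conjI)
  show "\<exists>C. \<forall>t p x r m. 0 < p \<longrightarrow> BIC t x p r CON > BIC t x p r m \<longrightarrow>
          real t * gain t x p r m / R0 t r > C (df m) t \<and> C (df m) t > 0"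
  proof (intro exI[of _ min_relative_gain] allI impI conjI)
    fix t p x r m
    assume hyps: "0 < p" "BIC t x p r m < BIC t x p r CON"
    then show "min_relative_gain (df m) t < real t * gain t x p r m / R0 t r"
      by (rule relative_gain_gt_if_BIC_less_CON)
    from hyps have "m \<noteq> CON" by auto
    with hyps show "0 < min_relative_gain (df m) t"
      by (intro min_relative_gain_pos two_le_card_if_BIC_less_CON df_ge_2)
  qed
qed (use gain_ratio_ge_if_BIC_less con_selected_translate in auto)

end
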